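(* Let $\{(\mathbf{x}_i,y_i)\}_{i=1}^n$ be an arbitrary data set with $\mathbf{x}_i\in\mathbb{R}^d$, $y_i\in\mathbb{R}$. Let $k\ge 2d$ and fix $\mathbf{v}\in\mathbb{R}^k$ having at least $d$ strictly positive entries and at least $d$ strictly negative entries. Consider, as a function of $\mathbf{W}\in\mathbb{R}^{k\times d}$ (with rows $\mathbf{w}_1^T,\dots,\mathbf{w}_k^T$), the loss $$\mathcal{L}(\mathbf{W})=\frac{1}{2n}\sum_{i=1}^n\Big(y_i-\sum_{\ell=1}^k v_\ell\,\langle \mathbf{w}_\ell,\mathbf{x}_i\rangle^2\Big)^2 .$$ Then: (i) every local minimum of $\mathcal{L}$ is a global minimum; (ii) at every saddle point $\mathbf{W}_s$ there is a direction $\mathbf{U}\in\mathbb{R}^{k\times d}$ with $\mathrm{vect}(\mathbf{U})^T\nabla^2\mathcal{L}(\mathbf{W}_s)\mathrm{vect}(\mathbf{U})<0$. Moreover, there is a numerical constant $c>0$ such that whenever $d\le n\le c d^2$, for Lebesgue-almost every choice of inputs $(\mathbf{x}_1,\dots,\mathbf{x}_n)\in(\mathbb{R}^d)^n$ (and arbitrary labels), the global minimum value of $\mathcal{L}$ equals $0$.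
   Context: This is the loss of a one-hidden-layer network $\mathbf{x}\mapsto \mathbf{v}^T\phi(\mathbf{W}\mathbf{x})$ with quadratic activation $\phi(z)=z^2$ applied entrywise, with the output weights $\mathbf{v}$ held fixed. $\mathrm{vect}(\mathbf{U})$ denotes the vectorization of $\mathbf{U}$ and $\nabla^2\mathcal{L}$ the Hessian with respect to $\mathrm{vect}(\mathbf{W})$. *)

theory Defs
  imports "HOL-Analysis.Analysis"
begin

text \<open>Conventions: indices are 0-based. Data points: x i j is the j-th coordinate
 of x_i (i < n, j < d); labels y i (i < n); output weights v l (l < k);
 weight matrix W l j is entry (l,j) of W in R^(k x d), i.e. row l is w_l.
 Values outside these index ranges are irrelevant.\<close>

definition quad_loss ::
  "nat \<Rightarrow> nat \<Rightarrow> nat \<Rightarrow> (nat \<Rightarrow> real) \<Rightarrow> (nat \<Rightarrow> nat \<Rightarrow> real) \<Rightarrow> (nat \<Rightarrow> real)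
   \<Rightarrow> (nat \<Rightarrow> nat \<Rightarrow> real) \<Rightarrow> real" where
  "quad_loss n d k v x y W =
     1 / (2 * real n) *
     (\<Sum>i<n. (y i - (\<Sum>l<k. v l * (\<Sum>j<d. W l j * x i j)\<^sup>2))\<^sup>2)"

definition is_local_min ::
  "nat \<Rightarrow> nat \<Rightarrow> ((nat \<Rightarrow> nat \<Rightarrow> real) \<Rightarrow> real) \<Rightarrow> (nat \<Rightarrow> nat \<Rightarrow> real) \<Rightarrow> bool" where
  "is_local_min k d f W \<longleftrightarrow>
     (\<exists>\<epsilon>>0. \<forall>W'. (\<Sum>l<k. \<Sum>j<d. (W' l j - W l j)\<^sup>2) < \<epsilon>\<^sup>2 \<longrightarrow> f W \<le> f W')"

definition is_local_max ::
  "nat \<Rightarrow> nat \<Rightarrow> ((nat \<Rightarrow> nat \<Rightarrow> real) \<Rightarrow> real) \<Rightarrow> (nat \<Rightarrow> nat \<Rightarrow> real) \<Rightarrow> bool" where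
  "is_local_max k d f W \<longleftrightarrow>
     (\<exists>\<epsilon>>0. \<forall>W'. (\<Sum>l<k. \<Sum>j<d. (W' l j - W l j)\<^sup>2) < \<epsilon>\<^sup>2 \<longrightarrow> f W' \<le> f W)"

definition is_global_min :: "((nat \<Rightarrow> nat \<Rightarrow> real) \<Rightarrow> real) \<Rightarrow> (nat \<Rightarrow> nat \<Rightarrow> real) \<Rightarrow> bool" where
  "is_global_min f W \<longleftrightarrow> (\<forall>W'. f W \<le> f W')"

definition partial ::
  "((nat \<Rightarrow> nat \<Rightarrow> real) \<Rightarrow> real) \<Rightarrow> nat \<Rightarrow> nat \<Rightarrow> (nat \<Rightarrow> nat \<Rightarrow> real) \<Rightarrow> real" where
  "partial f a b W = deriv (\<lambda>t. f (W(a := (W a)(b := t)))) (W a b)"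

definition hessian ::
  "((nat \<Rightarrow> nat \<Rightarrow> real) \<Rightarrow> real) \<Rightarrow> (nat \<Rightarrow> nat \<Rightarrow> real) \<Rightarrow> nat \<times> nat \<Rightarrow> nat \<times> nat \<Rightarrow> real" where
  "hessian f W p q = partial (partial f (fst q) (snd q)) (fst p) (snd p) W"

definition hessian_quad ::
  "nat \<Rightarrow> nat \<Rightarrow> ((nat \<Rightarrow> nat \<Rightarrow> real) \<Rightarrow> real) \<Rightarrow> (nat \<Rightarrow> nat \<Rightarrow> real) \<Rightarrow> (nat \<Rightarrow> nat \<Rightarrow> real) \<Rightarrow> real" where
  "hessian_quad k d f W U =
     (\<Sum>a<k. \<Sum>b<d. \<Sum>a'<k. \<Sum>b'<d. U a b * hessian f W (a, b) (a', b') * U a' b')"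

definition is_critical ::
  "nat \<Rightarrow> nat \<Rightarrow> ((nat \<Rightarrow> nat \<Rightarrow> real) \<Rightarrow> real) \<Rightarrow> (nat \<Rightarrow> nat \<Rightarrow> real) \<Rightarrow> bool" where
  "is_critical k d f W \<longleftrightarrow> (\<forall>a<k. \<forall>b<d. partial f a b W = 0)"

definition is_saddle ::
  "nat \<Rightarrow> nat \<Rightarrow> ((nat \<Rightarrow> nat \<Rightarrow> real) \<Rightarrow> real) \<Rightarrow> (nat \<Rightarrow> nat \<Rightarrow> real) \<Rightarrow> bool" where
  "is_saddle k d f W \<longleftrightarrow> is_critical k d f W \<and> \<not> is_local_min k d f W \<and> \<not> is_local_max k d f W"

end

theory Submission
  imports Defs "Jordan_Normal_Form.Determinant"
begin

text \<open>
  The loss is half the mean squared residual \<open>r\<^sub>i = y\<^sub>i - x\<^sub>i\<^sup>T M x\<^sub>i\<close>, where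
  \<open>M = \<Sum>\<^sub>l v\<^sub>l w\<^sub>l w\<^sub>l\<^sup>T\<close>; as a function of \<open>M\<close> it is convex. Hence \<open>W\<close> is a global minimum as soon
  as the quadratic form \<open>Q(z) = \<Sum>\<^sub>i r\<^sub>i \<langle>z, x\<^sub>i\<rangle>\<^sup>2\<close> vanishes identically. If \<open>Q(z) \<noteq> 0\<close> at a critical
  point, the vectors \<open>v\<^sub>l w\<^sub>l\<close> of the at least \<open>d\<close> neurons whose \<open>v\<^sub>l\<close> has the sign of \<open>Q(z)\<close> all lie
  in the hyperplane orthogonal to \<open>\<Sum>\<^sub>i r\<^sub>i \<langle>z, x\<^sub>i\<rangle> x\<^sub>i \<noteq> 0\<close>, so a nontrivial combination \<open>\<beta>\<close>
  of them vanishes. Along the rank-one direction \<open>U = \<beta> z\<^sup>T\<close> the loss is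
  \<open>L(W) - t\<^sup>2 c Q(z) / n + O(t\<^sup>4)\<close> with \<open>c Q(z) > 0\<close>: the critical point is no local minimum and
  \<open>U\<close> is a direction of negative curvature.

  For the interpolation statement write \<open>d = h + p\<close> with \<open>n \<le> h p\<close>. With \<open>d\<close> positive and \<open>d\<close>
  negative output weights every quadratic form is realised by some \<open>W\<close> (polarisation), so it
  suffices to fit the labels by \<open>\<Sum>\<^sub>t \<alpha>\<^sub>t x\<^sub>u\<^sub>(\<^sub>t\<^sub>) x\<^sub>w\<^sub>(\<^sub>t\<^sub>)\<close> with \<open>n\<close> distinct pairs \<open>u(t) < h \<le> w(t)\<close>.
  This is a square linear system in \<open>\<alpha>\<close>; expanding its determinant along the last row shows,
  by induction on the rows, that it vanishes only on a null set.
\<close>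

definition dotp :: "nat \<Rightarrow> (nat \<Rightarrow> real) \<Rightarrow> (nat \<Rightarrow> real) \<Rightarrow> real" where
  "dotp d w u = (\<Sum>j<d. w j * u j)"

definition residual ::
  "nat \<Rightarrow> nat \<Rightarrow> (nat \<Rightarrow> real) \<Rightarrow> (nat \<Rightarrow> nat \<Rightarrow> real) \<Rightarrow> (nat \<Rightarrow> real)
   \<Rightarrow> (nat \<Rightarrow> nat \<Rightarrow> real) \<Rightarrow> nat \<Rightarrow> real" where
  "residual d k v x y W i = y i - (\<Sum>l<k. v l * (dotp d (W l) (x i))\<^sup>2)"

lemma dotp_scaled: "(\<Sum>j<d. w j * (c * u j)) = c * dotp d w u"
  by (simp add: dotp_def sum_distrib_left mult_ac)

lemma sum_weighted_dotp: "(\<Sum>b<d. (\<Sum>i<n. c i * x i b) * u b) = (\<Sum>i<n. c i * dotp d u (x i))"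
  unfolding dotp_def by (simp add: sum_distrib_left sum_distrib_right mult_ac sum.swap[where B="{..<n}"])

lemma quad_loss_residual:
  "quad_loss n d k v x y W = 1 / (2 * real n) * (\<Sum>i<n. (residual d k v x y W i)\<^sup>2)"
  unfolding quad_loss_def residual_def dotp_def ..

lemma quad_loss_nonneg: "0 \<le> quad_loss n d k v x y W"
  unfolding quad_loss_def by (intro mult_nonneg_nonneg sum_nonneg) auto

lemma quad_loss_eq_0_imp_global_min:
  "quad_loss n d k v x y W = 0 \<Longrightarrow> is_global_min (quad_loss n d k v x y) W"
  unfolding is_global_min_def using quad_loss_nonneg by metis

lemma global_min_imp_local_min: "is_global_min f W \<Longrightarrow> is_local_min k d f W"
  unfolding is_global_min_def is_local_min_def by (intro exI[of _ 1]) auto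

section \<open>Gradient and Hessian of the loss\<close>

definition loss_grad ::
  "nat \<Rightarrow> nat \<Rightarrow> nat \<Rightarrow> (nat \<Rightarrow> real) \<Rightarrow> (nat \<Rightarrow> nat \<Rightarrow> real) \<Rightarrow> (nat \<Rightarrow> real)
   \<Rightarrow> nat \<Rightarrow> nat \<Rightarrow> (nat \<Rightarrow> nat \<Rightarrow> real) \<Rightarrow> real" where
  "loss_grad n d k v x y a b W =
     -(2 / real n) * (\<Sum>i<n. residual d k v x y W i * v a * dotp d (W a) (x i) * x i b)"

definition loss_hess ::
  "nat \<Rightarrow> nat \<Rightarrow> nat \<Rightarrow> (nat \<Rightarrow> real) \<Rightarrow> (nat \<Rightarrow> nat \<Rightarrow> real) \<Rightarrow> (nat \<Rightarrow> real)
   \<Rightarrow> nat \<Rightarrow> nat \<Rightarrow> nat \<Rightarrow> nat \<Rightarrow> (nat \<Rightarrow> nat \<Rightarrow> real) \<Rightarrow> real" where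
  "loss_hess n d k v x y a b a' b' W = -(2 / real n) * (\<Sum>i<n.
     - 2 * v a * dotp d (W a) (x i) * x i b * v a' * dotp d (W a') (x i) * x i b'
     + residual d k v x y W i * v a' * (if a' = a then x i b * x i b' else 0))"

lemma dotp_upd_entry:
  assumes "b < d"
  shows "dotp d ((W(a := (W a)(b := t))) l) u = dotp d (W l) u + (if l = a then (t - W a b) * u b else 0)"
proof (cases "l = a")
  case True
  have "(\<Sum>j<d. ((W a)(b := t)) j * u j) = (\<Sum>j<d. W a j * u j + (if j = b then (t - W a b) * u b else 0))"
    by (rule sum.cong) (auto simp: algebra_simps)
  then show ?thesis
    using True assms by (simp add: dotp_def sum.distrib)
qed (simp add: dotp_def)

lemma residual_upd_entry:
  assumes "b < d" "a < k"
  shows "residual d k v x y (W(a := (W a)(b := t))) i =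
     residual d k v x y W i - v a * ((dotp d (W a) (x i) + (t - W a b) * x i b)\<^sup>2 - (dotp d (W a) (x i))\<^sup>2)"
proof -
  have "(\<Sum>l<k. v l * (dotp d ((W(a := (W a)(b := t))) l) (x i))\<^sup>2)
     = (\<Sum>l<k. v l * (dotp d (W l) (x i))\<^sup>2 + (if l = a then v a * ((dotp d (W a) (x i) + (t - W a b) * x i b)\<^sup>2 - (dotp d (W a) (x i))\<^sup>2) else 0))"
    by (rule sum.cong[OF refl], subst dotp_upd_entry[OF assms(1)]) (auto simp: algebra_simps)
  then show ?thesis
    using assms by (simp add: residual_def sum.distrib)
qed

lemma quad_loss_has_derivative_entry:
  assumes "b < d" "a < k"
  shows "((\<lambda>t. quad_loss n d k v x y (W(a := (W a)(b := t)))) has_real_derivative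
            loss_grad n d k v x y a b (W(a := (W a)(b := t0)))) (at t0)"
  unfolding quad_loss_residual loss_grad_def residual_upd_entry[OF assms] dotp_upd_entry[OF assms(1)]
  apply (rule derivative_eq_intros refl)+
  apply (simp add: sum_divide_distrib sum_distrib_left)
  apply (rule sum.cong, simp)
  apply (cases "n = 0"; simp add: field_simps)
  done

lemma loss_grad_has_derivative_entry:
  assumes "b < d" "a < k"
  shows "((\<lambda>t. loss_grad n d k v x y a' b' (W(a := (W a)(b := t)))) has_real_derivative
            loss_hess n d k v x y a b a' b' (W(a := (W a)(b := t0)))) (at t0)"
  unfolding loss_hess_def loss_grad_def residual_upd_entry[OF assms] dotp_upd_entry[OF assms(1)] sum_distrib_left
  by (cases "a' = a"; simp only: if_True if_False simp_thms;
      (rule derivative_eq_intros refl)+; rule sum.cong; simp add: field_simps power2_eq_square)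

lemma partial_quad_loss:
  assumes "b < d" "a < k"
  shows "partial (quad_loss n d k v x y) a b W = loss_grad n d k v x y a b W"
  unfolding partial_def
  using DERIV_imp_deriv[OF quad_loss_has_derivative_entry[OF assms, of n v x y W "W a b"]] by simp

lemma hessian_quad_loss:
  assumes "b < d" "a < k" "b' < d" "a' < k"
  shows "hessian (quad_loss n d k v x y) W (a, b) (a', b') = loss_hess n d k v x y a b a' b' W"
proof -
  have "partial (quad_loss n d k v x y) a' b' = loss_grad n d k v x y a' b'"
    using partial_quad_loss[OF assms(3,4)] by blast
  then have "hessian (quad_loss n d k v x y) W (a, b) (a', b') = partial (loss_grad n d k v x y a' b') a b W"
    by (simp only: hessian_def fst_conv snd_conv)
  then show ?thesis
    unfolding partial_def
    using DERIV_imp_deriv[OF loss_grad_has_derivative_entry[OF assms(1,2), of n v x y a' b' W "W a b"]]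
    by simp
qed

definition residual_form ::
  "nat \<Rightarrow> nat \<Rightarrow> nat \<Rightarrow> (nat \<Rightarrow> real) \<Rightarrow> (nat \<Rightarrow> nat \<Rightarrow> real) \<Rightarrow> (nat \<Rightarrow> real)
   \<Rightarrow> (nat \<Rightarrow> nat \<Rightarrow> real) \<Rightarrow> (nat \<Rightarrow> real) \<Rightarrow> real" where
  "residual_form n d k v x y W z = (\<Sum>i<n. residual d k v x y W i * (dotp d z (x i))\<^sup>2)"

lemma quad_form_gram:
  fixes g :: "nat \<Rightarrow> nat \<Rightarrow> nat \<Rightarrow> real"
  shows "(\<Sum>a<k. \<Sum>b<d. \<Sum>a'<k. \<Sum>b'<d. U a b * (\<Sum>i<n. g i a b * g i a' b') * U a' b')
       = (\<Sum>i<n. (\<Sum>a<k. \<Sum>b<d. U a b * g i a b)\<^sup>2)"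
proof -
  have "(\<Sum>i<n. (\<Sum>a<k. \<Sum>b<d. U a b * g i a b)\<^sup>2) =
     (\<Sum>i<n. \<Sum>a<k. \<Sum>b<d. \<Sum>a'<k. \<Sum>b'<d. U a' b' * g i a' b' * (U a b * g i a b))"
    by (simp add: power2_eq_square sum_distrib_left sum_distrib_right)
  also have "\<dots> = (\<Sum>a<k. \<Sum>b<d. \<Sum>a'<k. \<Sum>b'<d. \<Sum>i<n. U a' b' * g i a' b' * (U a b * g i a b))"
    by (simp only: sum.swap[where A="{..<n}"])
  finally show ?thesis
    by (simp add: sum_distrib_left sum_distrib_right mult_ac)
qed

lemma quad_form_block_diag:
  fixes h :: "nat \<Rightarrow> nat \<Rightarrow> nat \<Rightarrow> real"
  shows "(\<Sum>a<k. \<Sum>b<d. \<Sum>a'<k. \<Sum>b'<d. U a b * (if a' = a then h a b b' else 0) * U a' b')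
       = (\<Sum>a<k. \<Sum>b<d. \<Sum>b'<d. U a b * h a b b' * U a b')"
proof (rule sum.cong[OF refl], rule sum.cong[OF refl])
  fix a b assume a: "a \<in> {..<k}"
  have "(\<Sum>a'<k. \<Sum>b'<d. U a b * (if a' = a then h a b b' else 0) * U a' b')
     = (\<Sum>a'<k. if a' = a then (\<Sum>b'<d. U a b * h a b b' * U a b') else 0)"
    by (rule sum.cong) auto
  then show "(\<Sum>a'<k. \<Sum>b'<d. U a b * (if a' = a then h a b b' else 0) * U a' b')
      = (\<Sum>b'<d. U a b * h a b b' * U a b')"
    using a by simp
qed

lemma weighted_sum_dotp_square:
  "(\<Sum>i<n. r i * (dotp d z (x i))\<^sup>2) = (\<Sum>b<d. \<Sum>b'<d. z b * (\<Sum>i<n. r i * x i b * x i b') * z b')"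
proof -
  have "(\<Sum>i<n. r i * (dotp d z (x i))\<^sup>2) = (\<Sum>i<n. \<Sum>b<d. \<Sum>b'<d. z b * (r i * x i b * x i b') * z b')"
    by (simp add: dotp_def power2_eq_square sum_distrib_left sum_distrib_right algebra_simps)
  also have "\<dots> = (\<Sum>b<d. \<Sum>b'<d. \<Sum>i<n. z b * (r i * x i b * x i b') * z b')"
    by (simp only: sum.swap[where A="{..<n}"])
  finally show ?thesis
    by (simp add: sum_distrib_left sum_distrib_right)
qed

lemma loss_hess_split:
  "loss_hess n d k v x y a b a' b' W =
     4 / real n * (\<Sum>i<n. (v a * dotp d (W a) (x i) * x i b) * (v a' * dotp d (W a') (x i) * x i b'))
     + (if a' = a then -(2 / real n) * v a * (\<Sum>i<n. residual d k v x y W i * x i b * x i b') else 0)"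
  unfolding loss_hess_def
  by (cases "a' = a") (simp_all add: sum.distrib sum_distrib_left algebra_simps sum_negf sum_subtractf)

lemma hessian_quad_quad_loss:
  "hessian_quad k d (quad_loss n d k v x y) W U =
     4 / real n * (\<Sum>i<n. (\<Sum>a<k. v a * dotp d (W a) (x i) * dotp d (U a) (x i))\<^sup>2)
     - 2 / real n * (\<Sum>a<k. v a * residual_form n d k v x y W (U a))"
proof -
  let ?g = "\<lambda>i a b. v a * dotp d (W a) (x i) * x i b"
  let ?h = "\<lambda>a b b'. -(2 / real n) * v a * (\<Sum>i<n. residual d k v x y W i * x i b * x i b')"
  have "hessian_quad k d (quad_loss n d k v x y) W U =
      (\<Sum>a<k. \<Sum>b<d. \<Sum>a'<k. \<Sum>b'<d.
        4 / real n * (U a b * (\<Sum>i<n. ?g i a b * ?g i a' b') * U a' b')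
        + U a b * (if a' = a then ?h a b b' else 0) * U a' b')"
    unfolding hessian_quad_def
    by (intro sum.cong refl) (simp add: hessian_quad_loss loss_hess_split algebra_simps)
  also have "\<dots> = 4 / real n * (\<Sum>a<k. \<Sum>b<d. \<Sum>a'<k. \<Sum>b'<d. U a b * (\<Sum>i<n. ?g i a b * ?g i a' b') * U a' b')
      + (\<Sum>a<k. \<Sum>b<d. \<Sum>a'<k. \<Sum>b'<d. U a b * (if a' = a then ?h a b b' else 0) * U a' b')"
    by (simp add: sum.distrib sum_distrib_left)
  also have "\<dots> = 4 / real n * (\<Sum>i<n. (\<Sum>a<k. \<Sum>b<d. U a b * ?g i a b)\<^sup>2)
      + (\<Sum>a<k. \<Sum>b<d. \<Sum>b'<d. U a b * ?h a b b' * U a b')"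
    by (simp only: quad_form_gram quad_form_block_diag)
  also have "(\<Sum>a<k. \<Sum>b<d. \<Sum>b'<d. U a b * ?h a b b' * U a b')
      = - 2 / real n * (\<Sum>a<k. v a * residual_form n d k v x y W (U a))"
    unfolding residual_form_def weighted_sum_dotp_square
    by (simp add: sum_distrib_left algebra_simps)
  finally show ?thesis
    by (simp only: dotp_scaled)
qed

section \<open>Critical points and escape directions\<close>

lemma sq_dist_upd_entry:
  fixes W :: "nat \<Rightarrow> nat \<Rightarrow> real"
  assumes "a < k" "b < d"
  shows "(\<Sum>l<k. \<Sum>j<d. ((W(a := (W a)(b := t))) l j - W l j)\<^sup>2) = (t - W a b)\<^sup>2"
proof -
  have "(\<Sum>j<d. ((W(a := (W a)(b := t))) l j - W l j)\<^sup>2) = (if l = a then (t - W a b)\<^sup>2 else 0)" for l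
  proof -
    have "(\<Sum>j<d. ((W(a := (W a)(b := t))) l j - W l j)\<^sup>2)
        = (\<Sum>j<d. if l = a \<and> j = b then (t - W a b)\<^sup>2 else 0)"
      by (rule sum.cong) auto
    then show ?thesis
      using assms by (simp add: sum.If_cases)
  qed
  then show ?thesis
    using assms by simp
qed

lemma local_min_imp_critical:
  assumes "is_local_min k d (quad_loss n d k v x y) W"
  shows "is_critical k d (quad_loss n d k v x y) W"
  unfolding is_critical_def
proof (intro allI impI)
  fix a b assume ab: "a < k" "b < d"
  obtain e where e: "e > 0" "\<And>W'. (\<Sum>l<k. \<Sum>j<d. (W' l j - W l j)\<^sup>2) < e\<^sup>2 \<Longrightarrow>
      quad_loss n d k v x y W \<le> quad_loss n d k v x y W'"
    using assms unfolding is_local_min_def by blast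
  have D: "((\<lambda>t. quad_loss n d k v x y (W(a := (W a)(b := t)))) has_real_derivative
      loss_grad n d k v x y a b W) (at (W a b))"
    using quad_loss_has_derivative_entry[OF ab(2,1), of n v x y W "W a b"] by simp
  have "quad_loss n d k v x y (W(a := (W a)(b := W a b))) \<le> quad_loss n d k v x y (W(a := (W a)(b := t)))"
    if "\<bar>W a b - t\<bar> < e" for t
  proof -
    have "(t - W a b)\<^sup>2 < e\<^sup>2"
      using that e(1)
      by (metis abs_ge_zero abs_minus_commute power2_abs power_strict_mono zero_less_numeral)
    then show ?thesis
      using e(2) sq_dist_upd_entry[OF ab] by simp
  qed
  then have "loss_grad n d k v x y a b W = 0"
    using DERIV_local_min[OF D e(1)] by simp
  then show "partial (quad_loss n d k v x y) a b W = 0"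
    using partial_quad_loss[OF ab(2,1)] by simp
qed

lemma global_min_if_residual_form_zero:
  assumes "\<And>z. residual_form n d k v x y W z = 0"
  shows "is_global_min (quad_loss n d k v x y) W"
  unfolding is_global_min_def
proof
  fix W'
  let ?r = "residual d k v x y W" and ?r' = "residual d k v x y W'"
  define \<delta> where "\<delta> i = (\<Sum>l<k. v l * ((dotp d (W' l) (x i))\<^sup>2 - (dotp d (W l) (x i))\<^sup>2))" for i
  have r': "?r' i = ?r i - \<delta> i" for i
    unfolding residual_def \<delta>_def by (simp add: sum_subtractf algebra_simps)
  have "(\<Sum>i<n. ?r i * \<delta> i)
      = (\<Sum>l<k. v l * (residual_form n d k v x y W (W' l) - residual_form n d k v x y W (W l)))"
    unfolding \<delta>_def residual_form_def
    by (simp add: sum_distrib_left sum_subtractf algebra_simps sum.swap[where B="{..<k}"])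
  also have "\<dots> = 0"
    using assms by simp
  finally have "(\<Sum>i<n. ?r i * \<delta> i) = 0" .
  moreover have "(\<Sum>i<n. (?r' i)\<^sup>2) = (\<Sum>i<n. (?r i)\<^sup>2) - 2 * (\<Sum>i<n. ?r i * \<delta> i) + (\<Sum>i<n. (\<delta> i)\<^sup>2)"
    unfolding r' by (simp add: power2_eq_square algebra_simps sum.distrib sum_subtractf sum_distrib_left)
  ultimately have "(\<Sum>i<n. (?r i)\<^sup>2) \<le> (\<Sum>i<n. (?r' i)\<^sup>2)"
    by (simp add: sum_nonneg)
  then show "quad_loss n d k v x y W \<le> quad_loss n d k v x y W'"
    unfolding quad_loss_residual by (intro mult_left_mono) auto
qed

lemma underdetermined_homogeneous_system:
  fixes A :: "nat \<Rightarrow> 'a \<Rightarrow> 'b::field"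
  assumes "finite J" "m < card J"
  shows "\<exists>\<beta>. (\<exists>j\<in>J. \<beta> j \<noteq> 0) \<and> (\<forall>i<m. (\<Sum>j\<in>J. A i j * \<beta> j) = 0)"
  using assms
proof (induction m arbitrary: J A)
  case 0
  then obtain j where "j \<in> J"
    by (metis card.empty card_gt_0_iff equals0I)
  then show ?case
    by (intro exI[of _ "\<lambda>_. 1"]) auto
next
  case (Suc m)
  show ?case
  proof (cases "\<forall>j\<in>J. A m j = 0")
    case True
    from Suc.IH[of J A] Suc.prems obtain \<beta> where
      \<beta>: "\<exists>j\<in>J. \<beta> j \<noteq> 0" "\<forall>i<m. (\<Sum>j\<in>J. A i j * \<beta> j) = 0"
      by auto
    have "\<forall>i<Suc m. (\<Sum>j\<in>J. A i j * \<beta> j) = 0"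
      using \<beta>(2) True by (auto simp: less_Suc_eq)
    with \<beta>(1) show ?thesis
      by blast
  next
    case False
    then obtain j0 where j0: "j0 \<in> J" "A m j0 \<noteq> 0"
      by blast
    \<comment> \<open>Gaussian elimination of the unknown \<open>j0\<close> with equation \<open>m\<close>.\<close>
    define J' where "J' = J - {j0}"
    define A' where "A' i j = A i j - A i j0 * A m j / A m j0" for i j
    have "finite J'" "m < card J'"
      using Suc.prems j0 unfolding J'_def by (simp_all add: card_Diff_singleton)
    from Suc.IH[OF this, of A'] obtain \<beta>' where
      \<beta>': "\<exists>j\<in>J'. \<beta>' j \<noteq> 0" "\<forall>i<m. (\<Sum>j\<in>J'. A' i j * \<beta>' j) = 0"
      by auto
    define \<beta> where "\<beta> j = (if j = j0 then - (\<Sum>j\<in>J'. A m j * \<beta>' j) / A m j0 else \<beta>' j)" for j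
    have split: "(\<Sum>j\<in>J. A i j * \<beta> j) = A i j0 * \<beta> j0 + (\<Sum>j\<in>J'. A i j * \<beta>' j)" for i
    proof -
      have "(\<Sum>j\<in>J. A i j * \<beta> j) = A i j0 * \<beta> j0 + (\<Sum>j\<in>J'. A i j * \<beta> j)"
        unfolding J'_def using j0 Suc.prems(1) by (simp add: sum.remove)
      also have "(\<Sum>j\<in>J'. A i j * \<beta> j) = (\<Sum>j\<in>J'. A i j * \<beta>' j)"
        by (rule sum.cong) (auto simp: \<beta>_def J'_def)
      finally show ?thesis .
    qed
    have "(\<Sum>j\<in>J. A i j * \<beta> j) = 0" if "i < Suc m" for i
    proof (cases "i = m")
      case True
      then show ?thesis
        unfolding split using j0 by (simp add: \<beta>_def)
    next
      case False
      with that \<beta>'(2) have "(\<Sum>j\<in>J'. A' i j * \<beta>' j) = 0"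
        by simp
      moreover have "(\<Sum>j\<in>J'. A' i j * \<beta>' j)
          = (\<Sum>j\<in>J'. A i j * \<beta>' j) - A i j0 / A m j0 * (\<Sum>j\<in>J'. A m j * \<beta>' j)"
        unfolding A'_def by (simp add: sum_subtractf sum_distrib_left algebra_simps)
      ultimately show ?thesis
        unfolding split using j0 by (simp add: \<beta>_def field_simps)
    qed
    moreover have "\<exists>j\<in>J. \<beta> j \<noteq> 0"
      using \<beta>'(1) unfolding J'_def \<beta>_def by auto
    ultimately show ?thesis
      by blast
  qed
qed

lemma dependent_in_hyperplane:
  fixes u :: "'a \<Rightarrow> nat \<Rightarrow> real"
  assumes J: "finite J" "d \<le> card J" and g: "b0 < d" "g b0 \<noteq> 0"
    and orth: "\<And>j. j \<in> J \<Longrightarrow> (\<Sum>b<d. g b * u j b) = 0"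
  shows "\<exists>\<beta>. (\<exists>j\<in>J. \<beta> j \<noteq> 0) \<and> (\<forall>b<d. (\<Sum>j\<in>J. \<beta> j * u j b) = 0)"
proof -
  \<comment> \<open>Adjoin \<open>g\<close> as an extra column; its coefficient is forced to vanish by orthogonality.\<close>
  define A where "A b = case_option (g b) (\<lambda>j. u j b)" for b
  have "finite (insert None (Some ` J))" "d < card (insert None (Some ` J))"
    using J by (auto simp: card_image)
  from underdetermined_homogeneous_system[OF this, of A] obtain \<gamma> where
    \<gamma>: "\<exists>j\<in>insert None (Some ` J). \<gamma> j \<noteq> 0"
       "\<forall>b<d. (\<Sum>j\<in>insert None (Some ` J). A b j * \<gamma> j) = 0"
    by blast
  have eq: "g b * \<gamma> None + (\<Sum>j\<in>J. \<gamma> (Some j) * u j b) = 0" if "b < d" for b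
    using \<gamma>(2) that J(1) by (simp add: A_def sum.reindex mult.commute)
  have swap: "(\<Sum>b<d. \<Sum>j\<in>J. \<gamma> (Some j) * (g b * u j b)) = (\<Sum>j\<in>J. \<gamma> (Some j) * (\<Sum>b<d. g b * u j b))"
    by (subst sum.swap) (simp add: sum_distrib_left)
  have "0 = (\<Sum>b<d. g b * (g b * \<gamma> None + (\<Sum>j\<in>J. \<gamma> (Some j) * u j b)))"
    using eq by simp
  also have "\<dots> = \<gamma> None * (\<Sum>b<d. (g b)\<^sup>2) + (\<Sum>b<d. \<Sum>j\<in>J. \<gamma> (Some j) * (g b * u j b))"
    by (simp add: sum.distrib sum_distrib_left distrib_left power2_eq_square mult_ac)
  also have "\<dots> = \<gamma> None * (\<Sum>b<d. (g b)\<^sup>2)"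
    unfolding swap by (simp add: orth)
  finally have "\<gamma> None = 0"
    using g sum_pos2[of "{..<d}" b0 "\<lambda>b. (g b)\<^sup>2"] by simp
  then show ?thesis
    using \<gamma>(1) eq by (intro exI[of _ "\<gamma> \<circ> Some"]) auto
qed

lemma sign_class_card:
  fixes q :: real and v :: "nat \<Rightarrow> real"
  assumes "q \<noteq> 0"
    and pos: "d \<le> card {l. l < k \<and> v l > 0}" and neg: "d \<le> card {l. l < k \<and> v l < 0}"
  shows "d \<le> card {l. l < k \<and> 0 < v l * q}"
proof (cases "q > 0")
  case True
  then have "{l. l < k \<and> 0 < v l * q} = {l. l < k \<and> v l > 0}"
    by (auto simp: zero_less_mult_iff)
  with pos show ?thesis
    by simp
next
  case False
  with assms(1) have "q < 0"
    by simp
  then have "{l. l < k \<and> 0 < v l * q} = {l. l < k \<and> v l < 0}"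
    by (auto simp: zero_less_mult_iff)
  with neg show ?thesis
    by simp
qed

lemma residual_form_gradient:
  "(\<Sum>b<d. (\<Sum>i<n. residual d k v x y W i * dotp d z (x i) * x i b) * z b) = residual_form n d k v x y W z"
  unfolding residual_form_def sum_weighted_dotp by (simp add: power2_eq_square mult.assoc)

lemma critical_residual_form_gradient_orthogonal:
  assumes crit: "is_critical k d (quad_loss n d k v x y) W" and a: "a < k" "v a \<noteq> 0"
  shows "(\<Sum>b<d. (\<Sum>i<n. residual d k v x y W i * dotp d z (x i) * x i b) * W a b) = 0"
proof (cases "n = 0")
  case False
  let ?r = "residual d k v x y W"
  have "loss_grad n d k v x y a b W = 0" if "b < d" for b
    using crit a that partial_quad_loss[of b d a k n v x y W] unfolding is_critical_def by simp
  then have grad0: "(\<Sum>i<n. ?r i * dotp d (W a) (x i) * x i b) = 0" if "b < d" for b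
    using False a(2) that
    by (simp add: loss_grad_def sum_distrib_left[symmetric] mult.commute mult.left_commute)
  have "(\<Sum>b<d. (\<Sum>i<n. ?r i * dotp d z (x i) * x i b) * W a b)
      = (\<Sum>b<d. (\<Sum>i<n. ?r i * dotp d (W a) (x i) * x i b) * z b)"
    unfolding sum_weighted_dotp by (simp add: mult_ac)
  also have "\<dots> = 0"
    by (intro sum.neutral ballI) (simp add: grad0)
  finally show ?thesis .
qed simp

lemma critical_escape_direction:
  assumes crit: "is_critical k d (quad_loss n d k v x y) W"
    and pos: "d \<le> card {l. l < k \<and> v l > 0}" and neg: "d \<le> card {l. l < k \<and> v l < 0}"
    and Q: "residual_form n d k v x y W z \<noteq> 0"
  shows "\<exists>\<beta>. (\<forall>a. \<beta> a \<noteq> 0 \<longrightarrow> a < k \<and> 0 < v a * residual_form n d k v x y W z) \<and> (\<exists>a. \<beta> a \<noteq> 0)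
           \<and> (\<forall>j<d. (\<Sum>a<k. \<beta> a * v a * W a j) = 0)"
proof -
  let ?q = "residual_form n d k v x y W z"
  define g where "g b = (\<Sum>i<n. residual d k v x y W i * dotp d z (x i) * x i b)" for b
  define J where "J = {l. l < k \<and> 0 < v l * ?q}"
  have J: "finite J" "d \<le> card J"
    unfolding J_def using sign_class_card[OF Q pos neg] by simp_all
  have g_orth: "(\<Sum>b<d. g b * (v a * W a b)) = 0" if "a \<in> J" for a
  proof -
    have "a < k" "v a \<noteq> 0"
      using that unfolding J_def by auto
    then have "(\<Sum>b<d. g b * W a b) = 0"
      unfolding g_def by (rule critical_residual_form_gradient_orthogonal[OF crit])
    moreover have "(\<Sum>b<d. g b * (v a * W a b)) = v a * (\<Sum>b<d. g b * W a b)"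
      unfolding sum_distrib_left by (intro sum.cong refl) (rule mult.left_commute)
    ultimately show ?thesis
      by simp
  qed
  have "(\<Sum>b<d. g b * z b) = ?q"
    unfolding g_def by (rule residual_form_gradient)
  with Q have "\<exists>b0<d. g b0 \<noteq> 0"
    by (metis (mono_tags) lessThan_iff mult_zero_left sum.neutral)
  then obtain b0 where b0: "b0 < d" "g b0 \<noteq> 0"
    by blast
  from dependent_in_hyperplane[where u = "\<lambda>a b. v a * W a b", OF J b0 g_orth] obtain \<beta> where
    \<beta>: "\<exists>a\<in>J. \<beta> a \<noteq> 0" "\<forall>b<d. (\<Sum>a\<in>J. \<beta> a * (v a * W a b)) = 0"
    by auto
  define \<beta>' where "\<beta>' a = (if a \<in> J then \<beta> a else 0)" for a
  have "(\<Sum>a<k. \<beta>' a * v a * W a j) = (\<Sum>a\<in>J. \<beta> a * (v a * W a j))" for j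
  proof -
    have "(\<Sum>a<k. \<beta>' a * v a * W a j) = (\<Sum>a<k. if a \<in> J then \<beta> a * (v a * W a j) else 0)"
      by (rule sum.cong) (auto simp: \<beta>'_def)
    also have "\<dots> = (\<Sum>a\<in>{..<k} \<inter> J. \<beta> a * (v a * W a j))"
      by (simp add: sum.inter_restrict)
    also have "{..<k} \<inter> J = J"
      unfolding J_def by auto
    finally show ?thesis .
  qed
  then show ?thesis
    using \<beta> by (intro exI[of _ \<beta>']) (auto simp: \<beta>'_def J_def)
qed

lemma escape_orthogonal:
  assumes "\<And>j. j < d \<Longrightarrow> (\<Sum>a<k. \<beta> a * v a * W a j) = 0"
  shows "(\<Sum>a<k. \<beta> a * v a * dotp d (W a) u) = 0"
proof -
  have "(\<Sum>a<k. \<beta> a * v a * dotp d (W a) u) = (\<Sum>j<d. u j * (\<Sum>a<k. \<beta> a * v a * W a j))"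
    unfolding dotp_def by (simp add: sum_distrib_left sum.swap[where A="{..<k}"] mult_ac)
  then show ?thesis
    using assms by simp
qed

lemma dotp_rank_one_update:
  "dotp d (\<lambda>j. W l j + t * (\<beta> l * z j)) u = dotp d (W l) u + t * \<beta> l * dotp d z u"
  unfolding dotp_def by (simp add: sum.distrib sum_distrib_left algebra_simps)

lemma residual_rank_one_update:
  assumes "\<And>j. j < d \<Longrightarrow> (\<Sum>a<k. \<beta> a * v a * W a j) = 0"
  shows "residual d k v x y (\<lambda>l j. W l j + t * (\<beta> l * z j)) i
      = residual d k v x y W i - t\<^sup>2 * (\<Sum>a<k. v a * (\<beta> a)\<^sup>2) * (dotp d z (x i))\<^sup>2"
proof -
  have "(\<Sum>l<k. v l * (dotp d (W l) (x i) + t * \<beta> l * dotp d z (x i))\<^sup>2)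
      = (\<Sum>l<k. v l * (dotp d (W l) (x i))\<^sup>2)
        + 2 * t * dotp d z (x i) * (\<Sum>a<k. \<beta> a * v a * dotp d (W a) (x i))
        + t\<^sup>2 * (\<Sum>a<k. v a * (\<beta> a)\<^sup>2) * (dotp d z (x i))\<^sup>2"
    by (simp add: power2_eq_square sum.distrib sum_distrib_left sum_distrib_right algebra_simps)
  then show ?thesis
    unfolding residual_def dotp_rank_one_update by (simp add: escape_orthogonal[OF assms])
qed

lemma quad_loss_rank_one_update:
  assumes "\<And>j. j < d \<Longrightarrow> (\<Sum>a<k. \<beta> a * v a * W a j) = 0"
  defines "c \<equiv> \<Sum>a<k. v a * (\<beta> a)\<^sup>2"
  shows "quad_loss n d k v x y (\<lambda>l j. W l j + t * (\<beta> l * z j))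
      = quad_loss n d k v x y W - t\<^sup>2 * (c * residual_form n d k v x y W z) / real n
        + t\<^sup>2 * t\<^sup>2 * c\<^sup>2 * (\<Sum>i<n. (dotp d z (x i))\<^sup>2 * (dotp d z (x i))\<^sup>2) / (2 * real n)"
proof -
  have upd: "residual d k v x y (\<lambda>l j. W l j + t * (\<beta> l * z j)) i = residual d k v x y W i - t\<^sup>2 * c * (dotp d z (x i))\<^sup>2" for i
    using residual_rank_one_update[OF assms(1)] unfolding c_def .
  let ?S = "\<Sum>i<n. (dotp d z (x i))\<^sup>2 * (dotp d z (x i))\<^sup>2"
  have "(\<Sum>i<n. (residual d k v x y (\<lambda>l j. W l j + t * (\<beta> l * z j)) i)\<^sup>2)
      = (\<Sum>i<n. (residual d k v x y W i)\<^sup>2) - 2 * t\<^sup>2 * (c * residual_form n d k v x y W z) + t\<^sup>2 * t\<^sup>2 * c\<^sup>2 * ?S"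
    unfolding upd residual_form_def
    by (simp add: power2_eq_square sum.distrib sum_subtractf sum_distrib_left algebra_simps)
  then show ?thesis
    unfolding quad_loss_residual by (cases "n = 0") (simp_all add: field_simps)
qed
lemma exists_small_pos:
  fixes a b B C :: real
  assumes "0 < a" "0 < b" "0 \<le> B" "0 \<le> C"
  shows "\<exists>s>0. s * B < a \<and> s * C < b"
proof -
  define s where "s = min (a / (B + 1)) (b / (C + 1))"
  have "s > 0"
    using assms unfolding s_def by simp
  moreover have "s * B < a"
  proof -
    have "s * B < s * (B + 1)"
      using \<open>s > 0\<close> by simp
    also have "\<dots> \<le> a"
      using assms by (simp add: s_def flip: pos_le_divide_eq)
    finally show ?thesis .
  qed
  moreover have "s * C < b"
  proof -
    have "s * C < s * (C + 1)"
      using \<open>s > 0\<close> by simp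
    also have "\<dots> \<le> b"
      using assms by (simp add: s_def flip: pos_le_divide_eq)
    finally show ?thesis .
  qed
  ultimately show ?thesis
    by blast
qed

lemma rank_one_escape_not_local_min:
  assumes orth: "\<And>j. j < d \<Longrightarrow> (\<Sum>a<k. \<beta> a * v a * W a j) = 0"
    and pos: "0 < (\<Sum>a<k. v a * (\<beta> a)\<^sup>2) * residual_form n d k v x y W z"
  shows "\<not> is_local_min k d (quad_loss n d k v x y) W"
proof
  assume "is_local_min k d (quad_loss n d k v x y) W"
  then obtain e where e: "e > 0" "\<And>W'. (\<Sum>l<k. \<Sum>j<d. (W' l j - W l j)\<^sup>2) < e\<^sup>2 \<Longrightarrow>
      quad_loss n d k v x y W \<le> quad_loss n d k v x y W'"
    unfolding is_local_min_def by blast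
  define c where "c = (\<Sum>a<k. v a * (\<beta> a)\<^sup>2)"
  define q where "q = residual_form n d k v x y W z"
  define S where "S = (\<Sum>i<n. (dotp d z (x i))\<^sup>2 * (dotp d z (x i))\<^sup>2)"
  define N where "N = (\<Sum>l<k. \<Sum>j<d. (\<beta> l * z j)\<^sup>2)"
  have "n \<noteq> 0"
    using pos unfolding residual_form_def by (cases n) auto
  have "0 < c * q" "0 < e\<^sup>2" "0 \<le> c\<^sup>2 * S / 2" "0 \<le> N"
    using pos e(1) unfolding c_def q_def S_def N_def by (simp_all add: sum_nonneg)
  then obtain s where s: "s > 0" "s * (c\<^sup>2 * S / 2) < c * q" "s * N < e\<^sup>2"
    using exists_small_pos by blast
  define W' where "W' l j = W l j + sqrt s * (\<beta> l * z j)" for l j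
  have "(\<Sum>l<k. \<Sum>j<d. (W' l j - W l j)\<^sup>2) = s * N"
    unfolding W'_def N_def using s(1) by (simp add: sum_distrib_left power_mult_distrib)
  then have "quad_loss n d k v x y W \<le> quad_loss n d k v x y W'"
    using e(2) s(3) by simp
  moreover have "quad_loss n d k v x y W' = quad_loss n d k v x y W - s / real n * (c * q - s * (c\<^sup>2 * S / 2))"
  proof -
    have "quad_loss n d k v x y W' = quad_loss n d k v x y W - (sqrt s)\<^sup>2 * (c * q) / real n
        + (sqrt s)\<^sup>2 * (sqrt s)\<^sup>2 * c\<^sup>2 * S / (2 * real n)"
      unfolding W'_def c_def q_def S_def by (rule quad_loss_rank_one_update[OF orth])
    then show ?thesis
      using s(1) \<open>n \<noteq> 0\<close> by (simp add: field_simps power2_eq_square)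
  qed
  moreover have "0 < s / real n * (c * q - s * (c\<^sup>2 * S / 2))"
    using s(1,2) \<open>n \<noteq> 0\<close> by simp
  ultimately show False
    by simp
qed

lemma hessian_quad_rank_one_escape:
  assumes orth: "\<And>j. j < d \<Longrightarrow> (\<Sum>a<k. \<beta> a * v a * W a j) = 0"
    and pos: "0 < (\<Sum>a<k. v a * (\<beta> a)\<^sup>2) * residual_form n d k v x y W z"
  shows "hessian_quad k d (quad_loss n d k v x y) W (\<lambda>a b. \<beta> a * z b) < 0"
proof -
  have "n \<noteq> 0"
    using pos unfolding residual_form_def by (cases n) auto
  have dotp_U: "dotp d (\<lambda>b. \<beta> a * z b) u = \<beta> a * dotp d z u" for a u
    unfolding dotp_def by (simp add: sum_distrib_left mult.assoc)
  have "(\<Sum>a<k. v a * dotp d (W a) (x i) * dotp d (\<lambda>b. \<beta> a * z b) (x i))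
      = dotp d z (x i) * (\<Sum>a<k. \<beta> a * v a * dotp d (W a) (x i))" for i
    unfolding dotp_U by (simp add: sum_distrib_left mult_ac)
  then have first: "(\<Sum>a<k. v a * dotp d (W a) (x i) * dotp d (\<lambda>b. \<beta> a * z b) (x i)) = 0" for i
    by (simp add: escape_orthogonal[OF orth])
  have "(\<Sum>a<k. v a * residual_form n d k v x y W (\<lambda>b. \<beta> a * z b))
      = (\<Sum>a<k. v a * (\<beta> a)\<^sup>2) * residual_form n d k v x y W z"
    unfolding residual_form_def dotp_U
    by (simp add: sum_distrib_left sum_distrib_right power_mult_distrib mult_ac) (rule sum.swap)
  then show ?thesis
    unfolding hessian_quad_quad_loss first using pos \<open>n \<noteq> 0\<close> by simp
qed

lemma escape_direction_exists:
  assumes crit: "is_critical k d (quad_loss n d k v x y) W"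
    and not_min: "\<not> is_global_min (quad_loss n d k v x y) W"
    and pos: "d \<le> card {l. l < k \<and> v l > 0}" and neg: "d \<le> card {l. l < k \<and> v l < 0}"
  shows "\<exists>\<beta> z. (\<forall>j<d. (\<Sum>a<k. \<beta> a * v a * W a j) = 0)
               \<and> 0 < (\<Sum>a<k. v a * (\<beta> a)\<^sup>2) * residual_form n d k v x y W z"
proof -
  obtain z where Q: "residual_form n d k v x y W z \<noteq> 0"
    using not_min global_min_if_residual_form_zero by blast
  let ?q = "residual_form n d k v x y W z"
  obtain \<beta> a0 where \<beta>: "\<And>a. \<beta> a \<noteq> 0 \<Longrightarrow> a < k \<and> 0 < v a * ?q" "\<beta> a0 \<noteq> 0"
    "\<forall>j<d. (\<Sum>a<k. \<beta> a * v a * W a j) = 0"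
    using critical_escape_direction[OF crit pos neg Q] by blast
  have "(\<Sum>a<k. v a * (\<beta> a)\<^sup>2) * ?q = (\<Sum>a<k. (v a * ?q) * (\<beta> a)\<^sup>2)"
    unfolding sum_distrib_right by (simp add: mult_ac)
  also have "\<dots> > 0"
  proof (rule sum_pos2)
    show "a0 \<in> {..<k}" "0 < v a0 * ?q * (\<beta> a0)\<^sup>2"
      using \<beta>(1,2) by auto
    show "0 \<le> v a * ?q * (\<beta> a)\<^sup>2" for a
      using \<beta>(1)[of a] by (cases "\<beta> a = 0") auto
  qed simp
  finally show ?thesis
    using \<beta>(3) by blast
qed

theorem local_min_imp_global_min:
  assumes pos: "d \<le> card {l. l < k \<and> v l > 0}" and neg: "d \<le> card {l. l < k \<and> v l < 0}"
    and min: "is_local_min k d (quad_loss n d k v x y) W"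
  shows "is_global_min (quad_loss n d k v x y) W"
proof (rule ccontr)
  assume "\<not> is_global_min (quad_loss n d k v x y) W"
  from escape_direction_exists[OF local_min_imp_critical[OF min] this pos neg]
  show False
    using rank_one_escape_not_local_min min by blast
qed

theorem saddle_has_negative_curvature:
  assumes pos: "d \<le> card {l. l < k \<and> v l > 0}" and neg: "d \<le> card {l. l < k \<and> v l < 0}"
    and saddle: "is_saddle k d (quad_loss n d k v x y) W"
  shows "\<exists>U. hessian_quad k d (quad_loss n d k v x y) W U < 0"
proof -
  have crit: "is_critical k d (quad_loss n d k v x y) W"
    and "\<not> is_global_min (quad_loss n d k v x y) W"
    using saddle global_min_imp_local_min unfolding is_saddle_def by blast+
  from escape_direction_exists[OF this pos neg] show ?thesis
    using hessian_quad_rank_one_escape by blast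
qed

section \<open>Null sets of finite products of Lebesgue measure\<close>

abbreviation lborel_on :: "'i set \<Rightarrow> ('i \<Rightarrow> real) measure" where
  "lborel_on I \<equiv> PiM I (\<lambda>_. lborel)"

interpretation lborel_product: product_sigma_finite "\<lambda>_. lborel :: real measure"
  unfolding product_sigma_finite_def by (simp add: sigma_finite_lborel)

lemma null_sets_lborel_on_merge:
  assumes IJ: "I \<inter> J = {}" "finite I" "finite J" and B: "B \<in> sets (lborel_on (I \<union> J))"
    and slices: "AE X in lborel_on I. {x \<in> space (lborel_on J). merge I J (X, x) \<in> B} \<in> null_sets (lborel_on J)"
  shows "B \<in> null_sets (lborel_on (I \<union> J))"
proof -
  have "emeasure (lborel_on (I \<union> J)) B = (\<integral>\<^sup>+ Y. indicator B Y \<partial>lborel_on (I \<union> J))"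
    using B by simp
  also have "\<dots> = (\<integral>\<^sup>+ X. (\<integral>\<^sup>+ x. indicator B (merge I J (X, x)) \<partial>lborel_on J) \<partial>lborel_on I)"
    by (rule lborel_product.product_nn_integral_fold[OF IJ]) (use B in simp)
  also have "\<dots> = (\<integral>\<^sup>+ X. 0 \<partial>lborel_on I)"
  proof (rule nn_integral_cong_AE)
    show "AE X in lborel_on I. (\<integral>\<^sup>+ x. indicator B (merge I J (X, x)) \<partial>lborel_on J) = 0"
      using slices
    proof eventually_elim
      case (elim X)
      let ?S = "{x \<in> space (lborel_on J). merge I J (X, x) \<in> B}"
      have "(\<integral>\<^sup>+ x. indicator B (merge I J (X, x)) \<partial>lborel_on J) = (\<integral>\<^sup>+ x. indicator ?S x \<partial>lborel_on J)"
        by (rule nn_integral_cong) (auto simp: indicator_def)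
      also have "\<dots> = 0"
        using elim by (simp add: null_sets_def)
      finally show ?case .
    qed
  qed
  finally show ?thesis
    using B by auto
qed

lemma null_sets_lborel_on_insert:
  assumes I: "finite I" "j \<notin> I" and B: "B \<in> sets (lborel_on (insert j I))"
    and slices: "AE X in lborel_on I. \<exists>c. \<forall>t. X(j := t) \<in> B \<longrightarrow> t = c"
  shows "B \<in> null_sets (lborel_on (insert j I))"
proof -
  have "emeasure (lborel_on (insert j I)) B = (\<integral>\<^sup>+ Y. indicator B Y \<partial>lborel_on (insert j I))"
    using B by simp
  also have "\<dots> = (\<integral>\<^sup>+ X. (\<integral>\<^sup>+ t. indicator B (X(j := t)) \<partial>lborel) \<partial>lborel_on I)"
    by (rule lborel_product.product_nn_integral_insert[OF I]) (use B in simp)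
  also have "\<dots> = (\<integral>\<^sup>+ X. 0 \<partial>lborel_on I)"
  proof (rule nn_integral_cong_AE)
    show "AE X in lborel_on I. (\<integral>\<^sup>+ t. indicator B (X(j := t)) \<partial>lborel) = 0"
      using slices
    proof eventually_elim
      case (elim X)
      then obtain c where c: "\<And>t. X(j := t) \<in> B \<Longrightarrow> t = c"
        by blast
      have "AE t in lborel. indicator B (X(j := t)) = (0::ennreal)"
        using AE_lborel_singleton[of c] by eventually_elim (use c in \<open>auto simp: indicator_def\<close>)
      from nn_integral_cong_AE[OF this] show ?case
        by simp
    qed
  qed
  finally show ?thesis
    using B by auto
qed

lemma null_sets_zero_affine_coordinate:
  assumes I: "finite I" "j \<notin> I"
    and f: "f \<in> borel_measurable (lborel_on (insert j I))"
    and affine: "\<And>X s. f (X(j := s)) = L X * s + R X"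
    and L: "{X \<in> space (lborel_on I). L X = 0} \<in> null_sets (lborel_on I)"
  shows "{x \<in> space (lborel_on (insert j I)). f x = 0} \<in> null_sets (lborel_on (insert j I))"
proof (rule null_sets_lborel_on_insert[OF I])
  show "{x \<in> space (lborel_on (insert j I)). f x = 0} \<in> sets (lborel_on (insert j I))"
    using f by measurable
  show "AE X in lborel_on I. \<exists>c. \<forall>t. X(j := t) \<in> {x \<in> space (lborel_on (insert j I)). f x = 0} \<longrightarrow> t = c"
  proof (rule AE_I'[OF L], safe)
    fix X assume "X \<in> space (lborel_on I)"
      and no_root: "\<nexists>c. \<forall>t. X(j := t) \<in> {x \<in> space (lborel_on (insert j I)). f x = 0} \<longrightarrow> t = c"
    show "L X = 0"
    proof (rule ccontr)
      assume "L X \<noteq> 0"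
      then have "\<forall>t. X(j := t) \<in> {x \<in> space (lborel_on (insert j I)). f x = 0} \<longrightarrow> t = - R X / L X"
        by (auto simp: affine field_simps)
      with no_root show False
        by blast
    qed
  qed
qed

lemma null_sets_bilinear_zero:
  fixes a b :: "'t \<Rightarrow> 'i" and C :: "'t \<Rightarrow> real"
  assumes K: "finite K" and T: "finite T" "t0 \<in> T" "C t0 \<noteq> 0"
    and ab: "\<And>t. t \<in> T \<Longrightarrow> a t \<in> K \<and> b t \<in> K"
    and sep: "\<And>t t'. t \<in> T \<Longrightarrow> t' \<in> T \<Longrightarrow> a t \<noteq> b t'"
    and inj: "inj_on (\<lambda>t. (a t, b t)) T"
  shows "{x \<in> space (lborel_on K). (\<Sum>t\<in>T. C t * x (a t) * x (b t)) = 0} \<in> null_sets (lborel_on K)"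
proof -
  define u0 w0 where "u0 = a t0" and "w0 = b t0"
  define K1 where "K1 = K - {w0}"
  define K2 where "K2 = K1 - {u0}"
  have K1: "K = insert w0 K1" "finite K1" "w0 \<notin> K1" "K1 = insert u0 K2" "finite K2" "u0 \<notin> K2"
    using K T ab[of t0] sep[of t0 t0] unfolding K1_def K2_def u0_def w0_def by auto
  \<comment> \<open>The form is affine in the coordinate \<open>w0\<close>, with a coefficient \<open>L\<close> that is affine in \<open>u0\<close>
      with slope \<open>C t0\<close>.\<close>
  define L where "L X = (\<Sum>t\<in>T. if b t = w0 then C t * X (a t) else 0)" for X :: "'i \<Rightarrow> real"
  define R where "R X = (\<Sum>t\<in>T. if b t = w0 then 0 else C t * X (a t) * X (b t))" for X :: "'i \<Rightarrow> real"
  define L2 where "L2 X = (\<Sum>t\<in>T. if b t = w0 \<and> t \<noteq> t0 then C t * X (a t) else 0)" for X :: "'i \<Rightarrow> real"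
  have aK1: "a t \<in> K1" if "t \<in> T" for t
    using ab[OF that] sep[OF that T(2)] unfolding K1_def w0_def by auto
  have "{X \<in> space (lborel_on K1). L X = 0} \<in> null_sets (lborel_on K1)"
    unfolding K1(4)
  proof (rule null_sets_zero_affine_coordinate)
    show "L \<in> borel_measurable (lborel_on (insert u0 K2))"
      unfolding K1(4)[symmetric] L_def using aK1 by measurable
    show "L (X(u0 := s)) = C t0 * s + L2 X" for X s
    proof -
      have "L (X(u0 := s)) = (\<Sum>t\<in>T. (if t = t0 then C t0 * s else 0) + (if b t = w0 \<and> t \<noteq> t0 then C t * X (a t) else 0))"
        unfolding L_def using inj T(2) by (intro sum.cong refl) (auto simp: u0_def w0_def inj_on_def)
      then show ?thesis
        unfolding L2_def using T by (simp add: sum.distrib)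
    qed
    show "{X \<in> space (lborel_on K2). C t0 = 0} \<in> null_sets (lborel_on K2)"
      using T(3) by simp
  qed (use K1 in auto)
  then show ?thesis
    unfolding K1(1)
  proof (rule null_sets_zero_affine_coordinate[rotated 4])
    show "(\<lambda>x. \<Sum>t\<in>T. C t * x (a t) * x (b t)) \<in> borel_measurable (lborel_on (insert w0 K1))"
      unfolding K1(1)[symmetric] by measurable (auto dest: ab)
    show "(\<Sum>t\<in>T. C t * (X(w0 := s)) (a t) * (X(w0 := s)) (b t)) = L X * s + R X" for X s
      unfolding L_def R_def sum_distrib_right sum.distrib[symmetric]
      using sep T(2) unfolding w0_def by (intro sum.cong refl) auto
  qed (use K1 in auto)
qed

section \<open>Generic invertibility of the pair-product matrix\<close>

text \<open>Row \<open>i\<close> lists the products \<open>x\<^sub>i\<^sub>u x\<^sub>i\<^sub>,\<^sub>h\<^sub>+\<^sub>w\<close> of coordinates of the \<open>i\<close>-th data point with \<open>u < h\<close>,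
  \<open>w < p\<close>; column \<open>t\<close> encodes the pair \<open>(u, w) = (t div p, t mod p)\<close>.\<close>

definition pair_product_mat :: "nat \<Rightarrow> nat \<Rightarrow> nat \<Rightarrow> (nat \<times> nat \<Rightarrow> real) \<Rightarrow> real mat" where
  "pair_product_mat h p m X = mat m m (\<lambda>(i, t). X (i, t div p) * X (i, h + t mod p))"

lemma pair_product_mat_carrier: "pair_product_mat h p m X \<in> carrier_mat m m"
  unfolding pair_product_mat_def by simp

lemma pair_index_bounds:
  fixes t h p :: nat
  assumes "0 < p" "t < h * p"
  shows "t div p < h" "h + t mod p < h + p"
proof -
  show "t div p < h"
    using assms(2) by (rule less_mult_imp_div_less)
  show "h + t mod p < h + p"
    using assms by simp
qed

lemma det_pair_product_mat_measurable:
  assumes p: "0 < p" and m: "m \<le> h * p"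
  shows "(\<lambda>X. det (pair_product_mat h p m X)) \<in> borel_measurable (lborel_on ({..<m} \<times> {..<h + p}))"
proof -
  have det: "det (pair_product_mat h p m X) = (\<Sum>\<pi> | \<pi> permutes {0..<m}.
      signof \<pi> * (\<Prod>i = 0..<m. X (i, \<pi> i div p) * X (i, h + \<pi> i mod p)))" for X
    unfolding det_def'[OF pair_product_mat_carrier]
  proof (rule sum.cong[OF refl], rule arg_cong[where f="\<lambda>u. _ * u"], rule prod.cong[OF refl])
    fix \<pi> i assume "\<pi> \<in> {\<pi>. \<pi> permutes {0..<m}}" and i: "i \<in> {0..<m}"
    then have "\<pi> i < m"
      using permutes_in_image[of \<pi> "{0..<m}" i] by auto
    then show "pair_product_mat h p m X $$ (i, \<pi> i) = X (i, \<pi> i div p) * X (i, h + \<pi> i mod p)"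
      unfolding pair_product_mat_def using i by simp
  qed
  have "(i, \<pi> i div p) \<in> {..<m} \<times> {..<h + p}" "(i, h + \<pi> i mod p) \<in> {..<m} \<times> {..<h + p}"
    if "\<pi> permutes {0..<m}" "i \<in> {0..<m}" for \<pi> i
  proof -
    have bound: "\<pi> i < h * p"
      using permutes_in_image[OF that(1), of i] that(2) m by simp
    then show "(i, \<pi> i div p) \<in> {..<m} \<times> {..<h + p}" "(i, h + \<pi> i mod p) \<in> {..<m} \<times> {..<h + p}"
      using that(2) pair_index_bounds[OF p bound] by auto
  qed
  then show ?thesis
    unfolding det by measurable
qed

lemma mat_delete_pair_product_mat_last_row_cong:
  assumes "\<And>i j. i < m \<Longrightarrow> Y (i, j) = Y' (i, j)"
  shows "mat_delete (pair_product_mat h p (Suc m) Y) m t = mat_delete (pair_product_mat h p (Suc m) Y') m t"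
  unfolding mat_delete_def pair_product_mat_def by (rule eq_matI) (simp_all add: assms)

lemma mat_delete_pair_product_mat_last:
  "mat_delete (pair_product_mat h p (Suc m) Y) m m = pair_product_mat h p m Y"
  unfolding mat_delete_def pair_product_mat_def by (rule eq_matI) simp_all

lemma det_pair_product_mat_Suc:
  "det (pair_product_mat h p (Suc m) Y)
     = (\<Sum>t<Suc m. cofactor (pair_product_mat h p (Suc m) Y) m t * Y (m, t div p) * Y (m, h + t mod p))"
  unfolding laplace_expansion_row[OF pair_product_mat_carrier lessI]
  by (intro sum.cong refl) (simp add: pair_product_mat_def mult_ac)

lemma det_pair_product_mat_Suc_slice_null:
  assumes p: "0 < p" and m: "Suc m \<le> h * p"
    and X: "X \<in> space (lborel_on ({..<m} \<times> {..<h + p}))"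
    and nonsingular: "det (pair_product_mat h p m X) \<noteq> 0"
  defines "I \<equiv> {..<m} \<times> {..<h + p}" and "J \<equiv> {m} \<times> {..<h + p}"
  shows "{x \<in> space (lborel_on J). det (pair_product_mat h p (Suc m) (merge I J (X, x))) = 0}
           \<in> null_sets (lborel_on J)"
proof -
  have bounds: "t div p < h" "t div p < h + p" "h + t mod p < h + p" if "t < Suc m" for t
    using pair_index_bounds[OF p, of t h] that m by auto
  \<comment> \<open>The cofactors of the last row only involve the first \<open>m\<close> rows, which \<open>merge\<close> takes from \<open>X\<close>.\<close>
  define C where "C t = cofactor (pair_product_mat h p (Suc m) X) m t" for t
  have "merge I J (X, x) (i, j) = X (i, j)" if "i < m" for x i j
    using X that unfolding I_def J_def by (auto simp: merge_def space_PiM PiE_def extensional_def)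
  then have cof: "cofactor (pair_product_mat h p (Suc m) (merge I J (X, x))) m t = C t" for x t
    unfolding C_def cofactor_def
    using mat_delete_pair_product_mat_last_row_cong[of m "merge I J (X, x)" X h p t] by simp
  have "det (pair_product_mat h p (Suc m) (merge I J (X, x)))
      = (\<Sum>t\<in>{..<Suc m}. C t * x (m, t div p) * x (m, h + t mod p))" for x
  proof -
    have "merge I J (X, x) (m, j) = x (m, j)" if "j < h + p" for j
      using that unfolding I_def J_def merge_def by simp
    then show ?thesis
      unfolding det_pair_product_mat_Suc cof using bounds by (intro sum.cong refl) simp
  qed
  moreover have "{x \<in> space (lborel_on J). (\<Sum>t\<in>{..<Suc m}. C t * x (m, t div p) * x (m, h + t mod p)) = 0}
      \<in> null_sets (lborel_on J)"
  proof (rule null_sets_bilinear_zero)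
    show "C m \<noteq> 0"
      using nonsingular by (simp add: C_def cofactor_def mat_delete_pair_product_mat_last)
    show "(m, t div p) \<in> J \<and> (m, h + t mod p) \<in> J" if "t \<in> {..<Suc m}" for t
      using bounds that unfolding J_def by simp
    show "(m, t div p) \<noteq> (m, h + t' mod p)" if "t \<in> {..<Suc m}" "t' \<in> {..<Suc m}" for t t'
      using bounds(1)[of t] that by auto
    show "inj_on (\<lambda>t. ((m, t div p), (m, h + t mod p))) {..<Suc m}"
      by (intro inj_onI) (metis add_left_cancel div_mult_mod_eq prod.inject)
  qed (simp_all add: J_def)
  ultimately show ?thesis
    by simp
qed

lemma det_pair_product_mat_zero_null:
  assumes p: "0 < p" and m: "m \<le> h * p"
  shows "{X \<in> space (lborel_on ({..<m} \<times> {..<h + p})). det (pair_product_mat h p m X) = 0}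
           \<in> null_sets (lborel_on ({..<m} \<times> {..<h + p}))"
  using m
proof (induction m)
  case 0
  then show ?case
    by (simp add: pair_product_mat_def det_def)
next
  case (Suc m)
  define I J where "I = {..<m} \<times> {..<h + p}" and "J = {m} \<times> {..<h + p}"
  define B where "B = {Y \<in> space (lborel_on (I \<union> J)). det (pair_product_mat h p (Suc m) Y) = 0}"
  have IJ: "I \<inter> J = {}" "finite I" "finite J" "{..<Suc m} \<times> {..<h + p} = I \<union> J"
    unfolding I_def J_def by auto
  have "B \<in> null_sets (lborel_on (I \<union> J))"
  proof (rule null_sets_lborel_on_merge[OF IJ(1-3)])
    have "(\<lambda>X. det (pair_product_mat h p (Suc m) X)) \<in> borel_measurable (lborel_on (I \<union> J))"
      using det_pair_product_mat_measurable[OF p Suc.prems] unfolding IJ(4) .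
    then show "B \<in> sets (lborel_on (I \<union> J))"
      unfolding B_def by (rule borel_measurable_eq[OF _ borel_measurable_const])
    have "m \<le> h * p"
      using Suc.prems by simp
    show "AE X in lborel_on I. {x \<in> space (lborel_on J). merge I J (X, x) \<in> B} \<in> null_sets (lborel_on J)"
    proof (rule AE_I'[OF Suc.IH[OF \<open>m \<le> h * p\<close>, folded I_def]], safe)
      fix X assume X: "X \<in> space (lborel_on I)"
        and slice: "{x \<in> space (lborel_on J). merge I J (X, x) \<in> B} \<notin> null_sets (lborel_on J)"
      have "merge I J (X, x) \<in> space (lborel_on (I \<union> J))" if "x \<in> space (lborel_on J)" for x
        using X that IJ(1) by (simp add: space_PiM)
      then have "{x \<in> space (lborel_on J). merge I J (X, x) \<in> B}
          = {x \<in> space (lborel_on J). det (pair_product_mat h p (Suc m) (merge I J (X, x))) = 0}"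
        unfolding B_def by auto
      with slice det_pair_product_mat_Suc_slice_null[OF p Suc.prems X[unfolded I_def]]
      show "det (pair_product_mat h p m X) = 0"
        unfolding I_def J_def by auto
    qed
  qed
  then show ?case
    unfolding B_def IJ(4) .
qed

section \<open>Exact interpolation\<close>

lemma nonsingular_system_solvable:
  fixes M :: "real mat"
  assumes M: "M \<in> carrier_mat n n" and D: "det M \<noteq> 0"
  shows "\<exists>\<alpha>. \<forall>i<n. (\<Sum>t<n. M $$ (i, t) * \<alpha> t) = y i"
proof -
  define w where "w = adj_mat M *\<^sub>v vec n y"
  have A: "adj_mat M \<in> carrier_mat n n"
    using adj_mat(1)[OF M] .
  then have w: "w \<in> carrier_vec n"
    unfolding w_def by simp
  have "(\<Sum>t<n. M $$ (i, t) * (vec_index w t / det M)) = y i" if i: "i < n" for i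
  proof -
    have "(\<Sum>t<n. M $$ (i, t) * vec_index w t) = vec_index (M *\<^sub>v w) i"
      using i M w by (simp add: scalar_prod_def row_def atLeast0LessThan)
    also have "\<dots> = vec_index ((M * adj_mat M) *\<^sub>v vec n y) i"
      using M A unfolding w_def by simp
    also have "\<dots> = det M * y i"
      using i unfolding adj_mat(2)[OF M]
      by (simp add: scalar_prod_def row_def atLeast0LessThan)
         (subst sum.cong[OF refl, where h="\<lambda>t. if i = t then det M * y t else 0"]; auto)
    finally show ?thesis
      using D by (simp add: sum_divide_distrib[symmetric])
  qed
  then show ?thesis
    by (intro exI[of _ "\<lambda>t. vec_index w t / det M"]) blast
qed

lemma signed_squares_represent_quadratic_form:
  fixes k :: nat and v :: "nat \<Rightarrow> real"
  assumes pos: "d \<le> card {l. l < k \<and> v l > 0}" and neg: "d \<le> card {l. l < k \<and> v l < 0}"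
  shows "\<exists>W. \<forall>\<xi>. (\<Sum>l<k. v l * (dotp d (W l) \<xi>)\<^sup>2) = (\<Sum>u<d. \<xi> u * dotp d (R u) \<xi>)"
proof -
  have fin: "finite {l. l < k \<and> v l > 0}" "finite {l. l < k \<and> v l < 0}"
    by simp_all
  obtain fp where fp: "fp ` {..<d} \<subseteq> {l. l < k \<and> v l > 0}" "inj_on fp {..<d}"
    using card_le_inj[of "{..<d}" "{l. l < k \<and> v l > 0}"] pos fin by auto
  obtain fn where fn: "fn ` {..<d} \<subseteq> {l. l < k \<and> v l < 0}" "inj_on fn {..<d}"
    using card_le_inj[of "{..<d}" "{l. l < k \<and> v l < 0}"] neg fin by auto
  define P N where "P = fp ` {..<d}" and "N = fn ` {..<d}"
  have "P \<inter> N \<subseteq> {l. l < k \<and> v l > 0} \<inter> {l. l < k \<and> v l < 0}"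
    using fp(1) fn(1) unfolding P_def N_def by blast
  moreover have "{l. l < k \<and> v l > 0} \<inter> {l. l < k \<and> v l < 0} = {}"
    by auto
  ultimately have "P \<inter> N = {}"
    by blast
  moreover have "P \<union> N \<subseteq> {..<k}"
    using fp(1) fn(1) unfolding P_def N_def by auto
  ultimately have PN: "P \<inter> N = {}" "P \<union> N \<subseteq> {..<k}"
    by simp_all
  \<comment> \<open>Polarization: \<open>\<xi>\<^sub>u \<rho>\<^sub>u = ((\<xi>\<^sub>u + \<rho>\<^sub>u)\<^sup>2 - (\<xi>\<^sub>u - \<rho>\<^sub>u)\<^sup>2) / 4\<close> with \<open>\<rho> = R \<xi>\<close>; the positive
      neuron \<open>fp u\<close> produces the first square, the negative neuron \<open>fn u\<close> the second.\<close>
  define W where "W l j =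
     (if l \<in> P then (of_bool (j = inv_into {..<d} fp l) + R (inv_into {..<d} fp l) j) / (2 * sqrt (v l))
      else if l \<in> N then (of_bool (j = inv_into {..<d} fn l) - R (inv_into {..<d} fn l) j) / (2 * sqrt (- v l))
      else 0)" for l j
  have "(\<Sum>l<k. v l * (dotp d (W l) \<xi>)\<^sup>2) = (\<Sum>u<d. \<xi> u * dotp d (R u) \<xi>)" for \<xi>
  proof -
    define f where "f l = v l * (dotp d (W l) \<xi>)\<^sup>2" for l
    have delta: "(\<Sum>j<d. of_bool (j = u) * \<xi> j) = \<xi> u" if "u < d" for u
      using that by (simp add: of_bool_def if_distrib[of "\<lambda>c. c * _"] cong: if_cong)
    have fP: "f (fp u) = (\<xi> u + dotp d (R u) \<xi>)\<^sup>2 / 4" if u: "u < d" for u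
    proof -
      have "fp u \<in> P" "v (fp u) > 0" "inv_into {..<d} fp (fp u) = u"
        using u fp unfolding P_def by auto
      moreover have "dotp d (\<lambda>j. (of_bool (j = u) + R u j) / c) \<xi> = (\<xi> u + dotp d (R u) \<xi>) / c" for c
        using delta[OF u] by (simp add: dotp_def sum_divide_distrib[symmetric] sum.distrib distrib_right)
      ultimately show ?thesis
        unfolding f_def W_def by (simp add: power_divide power_mult_distrib)
    qed
    have fN: "f (fn u) = - (\<xi> u - dotp d (R u) \<xi>)\<^sup>2 / 4" if u: "u < d" for u
    proof -
      have "fn u \<in> N" "fn u \<notin> P" "v (fn u) < 0" "inv_into {..<d} fn (fn u) = u"
        using u fn PN(1) unfolding N_def by auto
      moreover have "dotp d (\<lambda>j. (of_bool (j = u) - R u j) / c) \<xi> = (\<xi> u - dotp d (R u) \<xi>) / c" for c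
        using delta[OF u] by (simp add: dotp_def sum_divide_distrib[symmetric] sum_subtractf left_diff_distrib)
      ultimately show ?thesis
        unfolding f_def W_def by (simp add: power_divide power_mult_distrib)
    qed
    have "(\<Sum>l<k. f l) = (\<Sum>l\<in>P \<union> N. f l)"
      by (rule sum.mono_neutral_right) (use PN(2) in \<open>auto simp: f_def W_def dotp_def\<close>)
    also have "\<dots> = (\<Sum>l\<in>P. f l) + (\<Sum>l\<in>N. f l)"
      by (rule sum.union_disjoint) (use PN(1) in \<open>auto simp: P_def N_def\<close>)
    also have "\<dots> = (\<Sum>u<d. f (fp u) + f (fn u))"
      unfolding P_def N_def sum.reindex[OF fp(2)] sum.reindex[OF fn(2)] by (simp add: sum.distrib)
    also have "\<dots> = (\<Sum>u<d. \<xi> u * dotp d (R u) \<xi>)"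
      by (intro sum.cong refl) (simp add: fP fN power2_eq_square field_simps)
    finally show ?thesis
      unfolding f_def .
  qed
  then show ?thesis
    by (intro exI[of _ W]) blast
qed

lemma bilinear_sum_delta:
  fixes \<alpha> \<xi> :: "nat \<Rightarrow> real" and a b :: "nat \<Rightarrow> nat"
  assumes bounds: "\<And>t. t < n \<Longrightarrow> a t < d \<and> b t < d"
  shows "(\<Sum>u<d. \<xi> u * dotp d (\<lambda>w. \<Sum>t<n. if a t = u \<and> b t = w then \<alpha> t else 0) \<xi>)
       = (\<Sum>t<n. \<alpha> t * \<xi> (a t) * \<xi> (b t))"
proof -
  have "(\<Sum>u<d. \<xi> u * dotp d (\<lambda>w. \<Sum>t<n. if a t = u \<and> b t = w then \<alpha> t else 0) \<xi>)
      = (\<Sum>u<d. \<Sum>w<d. \<Sum>t<n. if a t = u \<and> b t = w then \<alpha> t * \<xi> u * \<xi> w else 0)"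
    unfolding dotp_def
    by (simp add: sum_distrib_left sum_distrib_right if_distrib mult_ac cong: if_cong)
  also have "\<dots> = (\<Sum>t<n. \<Sum>u<d. \<Sum>w<d. if a t = u \<and> b t = w then \<alpha> t * \<xi> u * \<xi> w else 0)"
    by (simp only: sum.swap[where B="{..<n}"])
  also have "\<dots> = (\<Sum>t<n. \<alpha> t * \<xi> (a t) * \<xi> (b t))"
  proof (rule sum.cong[OF refl])
    fix t assume "t \<in> {..<n}"
    then have "a t < d" "b t < d"
      using bounds by auto
    have "(\<Sum>u<d. \<Sum>w<d. if a t = u \<and> b t = w then \<alpha> t * \<xi> u * \<xi> w else 0)
        = (\<Sum>u<d. if a t = u then (\<Sum>w<d. if b t = w then \<alpha> t * \<xi> u * \<xi> w else 0) else 0)"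
      by (rule sum.cong) auto
    also have "\<dots> = \<alpha> t * \<xi> (a t) * \<xi> (b t)"
      using \<open>a t < d\<close> \<open>b t < d\<close> by simp
    finally show "(\<Sum>u<d. \<Sum>w<d. if a t = u \<and> b t = w then \<alpha> t * \<xi> u * \<xi> w else 0)
        = \<alpha> t * \<xi> (a t) * \<xi> (b t)" .
  qed
  finally show ?thesis .
qed

lemma zero_loss_if_pair_product_nonsingular:
  fixes v :: "nat \<Rightarrow> real"
  assumes p: "0 < p" and n: "n \<le> h * p"
    and pos: "h + p \<le> card {l. l < k \<and> v l > 0}" and neg: "h + p \<le> card {l. l < k \<and> v l < 0}"
    and nonsingular: "det (pair_product_mat h p n X) \<noteq> 0"
  shows "\<exists>W. quad_loss n (h + p) k v (\<lambda>i j. X (i, j)) y W = 0"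
proof -
  let ?d = "h + p" and ?x = "\<lambda>i j. X (i, j)"
  obtain \<alpha> where \<alpha>: "\<And>i. i < n \<Longrightarrow> (\<Sum>t<n. pair_product_mat h p n X $$ (i, t) * \<alpha> t) = y i"
    using nonsingular_system_solvable[OF pair_product_mat_carrier nonsingular] by blast
  define R where "R u w = (\<Sum>t<n. if t div p = u \<and> h + t mod p = w then \<alpha> t else 0)" for u w
  obtain W where W: "\<And>\<xi>. (\<Sum>l<k. v l * (dotp ?d (W l) \<xi>)\<^sup>2) = (\<Sum>u<?d. \<xi> u * dotp ?d (R u) \<xi>)"
    using signed_squares_represent_quadratic_form[OF pos neg] by blast
  have bounds: "t div p < ?d \<and> h + t mod p < ?d" if "t < n" for t
    using pair_index_bounds[OF p, of t h] that n by auto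
  have "residual ?d k v ?x y W i = 0" if i: "i < n" for i
  proof -
    have "(\<Sum>l<k. v l * (dotp ?d (W l) (?x i))\<^sup>2) = (\<Sum>t<n. \<alpha> t * X (i, t div p) * X (i, h + t mod p))"
      unfolding W R_def by (rule bilinear_sum_delta[OF bounds])
    also have "\<dots> = y i"
      using \<alpha>[OF i] i by (simp add: pair_product_mat_def mult_ac)
    finally show ?thesis
      unfolding residual_def by simp
  qed
  then have "quad_loss n ?d k v ?x y W = 0"
    unfolding quad_loss_residual by simp
  then show ?thesis
    by blast
qed

lemma balanced_split_bound:
  fixes n d :: nat
  assumes "8 * n \<le> d * d"
  shows "n \<le> (d div 2) * (d - d div 2)"
proof -
  have "d * d \<le> 4 * ((d div 2) * (d - d div 2)) + 1"
  proof (cases "even d")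
    case True
    then obtain h where "d = 2 * h"
      by blast
    then show ?thesis
      by simp
  next
    case False
    then obtain h where "d = 2 * h + 1"
      using oddE by blast
    then show ?thesis
      by (simp add: algebra_simps)
  qed
  with assms show ?thesis
    by linarith
qed

lemma AE_zero_loss_global_min:
  fixes v :: "nat \<Rightarrow> real"
  assumes pos: "d \<le> card {l. l < k \<and> v l > 0}" and neg: "d \<le> card {l. l < k \<and> v l < 0}"
    and n: "8 * n \<le> d * d"
  shows "AE X in lborel_on ({..<n} \<times> {..<d}). \<forall>y. \<exists>W.
           is_global_min (quad_loss n d k v (\<lambda>i j. X (i, j)) y) W \<and> quad_loss n d k v (\<lambda>i j. X (i, j)) y W = 0"
proof (cases "n = 0")
  case True
  then show ?thesis
    by (intro AE_I2 allI exI[of _ "\<lambda>_ _. 0"] conjI quad_loss_eq_0_imp_global_min) (simp_all add: quad_loss_def)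
next
  case False
  define h p where "h = d div 2" and "p = d - d div 2"
  have d: "d = h + p" and "n \<le> h * p"
    using balanced_split_bound[OF n] unfolding h_def p_def by simp_all
  moreover have "0 < p"
    using False \<open>n \<le> h * p\<close> by (cases p) auto
  ultimately have null: "{X \<in> space (lborel_on ({..<n} \<times> {..<d})). det (pair_product_mat h p n X) = 0}
      \<in> null_sets (lborel_on ({..<n} \<times> {..<d}))"
    using det_pair_product_mat_zero_null by simp
  show ?thesis
  proof (rule AE_I'[OF null], safe)
    fix X y
    assume "X \<in> space (lborel_on ({..<n} \<times> {..<d}))"
      and no_min: "\<nexists>W. is_global_min (quad_loss n d k v (\<lambda>i j. X (i, j)) y) W \<and> quad_loss n d k v (\<lambda>i j. X (i, j)) y W = 0"
    show "det (pair_product_mat h p n X) = 0"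
    proof (rule ccontr)
      assume "det (pair_product_mat h p n X) \<noteq> 0"
      with zero_loss_if_pair_product_nonsingular[OF \<open>0 < p\<close> \<open>n \<le> h * p\<close>] pos neg d
      obtain W where "quad_loss n d k v (\<lambda>i j. X (i, j)) y W = 0"
        by blast
      with no_min quad_loss_eq_0_imp_global_min show False
        by blast
    qed
  qed
qed

theorem theorem2p1:
  shows "(\<forall>(n::nat) (d::nat) (k::nat) (v::nat \<Rightarrow> real) (x::nat \<Rightarrow> nat \<Rightarrow> real) (y::nat \<Rightarrow> real).
            k \<ge> 2 * d \<and> card {l. l < k \<and> v l > 0} \<ge> d \<and> card {l. l < k \<and> v l < 0} \<ge> d \<longrightarrow>
              (\<forall>W. is_local_min k d (quad_loss n d k v x y) W \<longrightarrow> is_global_min (quad_loss n d k v x y) W)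
            \<and> (\<forall>Ws. is_saddle k d (quad_loss n d k v x y) Ws \<longrightarrow>
                    (\<exists>U. hessian_quad k d (quad_loss n d k v x y) Ws U < 0)))
       \<and> (\<exists>c::real. c > 0 \<and>
            (\<forall>(n::nat) (d::nat) (k::nat) (v::nat \<Rightarrow> real).
               k \<ge> 2 * d \<and> card {l. l < k \<and> v l > 0} \<ge> d \<and> card {l. l < k \<and> v l < 0} \<ge> d
               \<and> d \<le> n \<and> real n \<le> c * (real d)\<^sup>2 \<longrightarrow>
               (AE X in PiM ({..<n} \<times> {..<d}) (\<lambda>_. lborel).
                  \<forall>y::nat \<Rightarrow> real.
                    (\<exists>W. is_global_min (quad_loss n d k v (\<lambda>i j. X (i, j)) y) W
                         \<and> quad_loss n d k v (\<lambda>i j. X (i, j)) y W = 0))))"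
proof -
  have eighth: "8 * n \<le> d * d" if "real n \<le> 1 / 8 * (real d)\<^sup>2" for n d :: nat
    using that by (simp add: power2_eq_square flip: of_nat_mult of_nat_le_iff)
  show ?thesis
    using local_min_imp_global_min saddle_has_negative_curvature AE_zero_loss_global_min[OF _ _ eighth]
    by (intro conjI exI[of _ "1 / 8"]) auto
qed

end
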